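(* As formal power series in $q$ (or for $|q|<1$), \[\sum_{\pi\in\overline{\mathcal{P}}}a^{\ell_o(\pi)}q^{|\pi|}=\sum_{m\ge0}\frac{q^m}{(q;q)_m}\sum_{j\ge0}a^jq^{\binom j2}{m\brack j}.\]
   Context: $\overline{\mathcal{P}}$ is the set of all overpartitions, including the empty one. An overpartition is a partition in which the first occurrence of each part size may be overlined. For an overpartition $\pi$: - $|\pi|$ is the sum of the sizes of its parts; - $\ell_o(\pi)$ is the number of overlined parts of $\pi$. $(a;q)_n=\prod_{i=0}^{n-1}(1-aq^i)$. The Gaussian binomial is ${M\brack N}=\frac{(q;q)_M}{(q;q)_N(q;q)_{M-N}}$ for $0\le N\le M$ and $0$ otherwise. *)

theory Defs
  imports "HOL-Analysis.Analysis" "HOL-Library.Multiset"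
begin

text \<open>An overpartition is represented as a pair (P, O): P is the multiset of
  (positive) parts, and O is the set of part sizes whose first occurrence is
  overlined (so O is a subset of the distinct part sizes of P).\<close>

type_synonym overpartition = "nat multiset \<times> nat set"

definition overpartitions :: "overpartition set" where
  "overpartitions = {(P, S). 0 \<notin># P \<and> S \<subseteq> set_mset P}"

definition op_size :: "overpartition \<Rightarrow> nat" where
  "op_size \<pi> = sum_mset (fst \<pi>)"

definition op_overlined :: "overpartition \<Rightarrow> nat" where
  "op_overlined \<pi> = card (snd \<pi>)"

definition qpoch :: "'a::comm_ring_1 \<Rightarrow> 'a \<Rightarrow> nat \<Rightarrow> 'a" where
  "qpoch a q n = (\<Prod>i<n. 1 - a * q ^ i)"

definition qbinom :: "'a::field \<Rightarrow> nat \<Rightarrow> nat \<Rightarrow> 'a" where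
  "qbinom q M N = (if N \<le> M then qpoch q q M / (qpoch q q N * qpoch q q (M - N)) else 0)"

end

theory Submission
  imports Defs
begin

text \<open>Sort overpartitions by their largest part. Those with all parts at most \<open>N\<close> are
  assembled independently part size by part size: a size \<open>k\<close> contributes a factor
  \<open>(1 + a q\<^sup>k)/(1 - q\<^sup>k)\<close> (overlined first occurrence or not, times any number of
  further copies), so they are generated by \<open>(-aq;q)\<^sub>N/(q;q)\<^sub>N\<close>. These products are
  the partial sums of \<open>\<Sum>\<^sub>m q\<^sup>m (-a;q)\<^sub>m/(q;q)\<^sub>m\<close>, so the overpartitions with largest part
  exactly \<open>m\<close> contribute the \<open>m\<close>-th term, and Rothe's \<open>q\<close>-binomial theorem expands
  \<open>(-a;q)\<^sub>m\<close> as the inner sum. The same computation at \<open>|a|, |q|\<close> together with the ratio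
  test gives absolute convergence, which licenses regrouping the sum by largest part.\<close>

lemma has_sum_mult_Times:
  fixes f :: "'b \<Rightarrow> 'a::{real_normed_field,banach}" and g :: "'c \<Rightarrow> 'a"
  assumes f: "(f has_sum s) A" and g: "(g has_sum t) B"
    and abs_f: "f abs_summable_on A" and abs_g: "g abs_summable_on B"
  shows "((\<lambda>(x, y). f x * g y) has_sum s * t) (A \<times> B)"
    and "(\<lambda>(x, y). f x * g y) abs_summable_on (A \<times> B)"
proof -
  show abs: "(\<lambda>(x, y). f x * g y) abs_summable_on (A \<times> B)"
  proof (rule summable_on_SigmaI[where g = "\<lambda>x. norm (f x) * infsum (\<lambda>y. norm (g y)) B"])
    show "((\<lambda>y. norm (case (x, y) of (x, y) \<Rightarrow> f x * g y))
        has_sum norm (f x) * infsum (\<lambda>y. norm (g y)) B) B" for x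
      using has_sum_cmult_right[OF has_sum_infsum[OF abs_g], of "norm (f x)"] by (simp add: norm_mult)
    show "(\<lambda>x. norm (f x) * infsum (\<lambda>y. norm (g y)) B) summable_on A"
      using summable_on_cmult_left[OF abs_f] .
  qed auto
  show "((\<lambda>(x, y). f x * g y) has_sum s * t) (A \<times> B)"
  proof (rule has_sum_SigmaI[where g = "\<lambda>x. f x * t"])
    show "((\<lambda>y. case (x, y) of (x, y) \<Rightarrow> f x * g y) has_sum f x * t) B" for x
      using has_sum_cmult_right[OF g, of "f x"] by simp
    show "((\<lambda>x. f x * t) has_sum s * t) A"
      using has_sum_cmult_left[OF f] .
    show "(\<lambda>(x, y). f x * g y) summable_on A \<times> B"
      using abs_summable_summable[OF abs] .
  qed
qed

lemma has_sum_fibres: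
  fixes f :: "'a \<Rightarrow> 'c::{comm_monoid_add,uniform_space,uniform_topological_group_add}"
  assumes "(f has_sum s) A" and "\<And>m. (f has_sum g m) {x \<in> A. h x = m}"
  shows "(g has_sum s) UNIV"
proof -
  have "((\<lambda>(m, x). f x) has_sum s) (SIGMA m:UNIV. {x \<in> A. h x = m})"
    using assms(1) by (subst has_sum_reindex_bij_witness[where i = "\<lambda>x. (h x, x)" and j = snd]) auto
  then show ?thesis
    by (rule has_sum_Sigma') (use assms(2) in simp)
qed

lemma summable_on_fibres_nonneg:
  fixes f :: "'a \<Rightarrow> real"
  assumes "\<And>x. x \<in> A \<Longrightarrow> 0 \<le> f x" and "\<And>m. (f has_sum g m) {x \<in> A. h x = m}"
    and "g summable_on UNIV"
  shows "f summable_on A"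
proof -
  have "f summable_on (\<Union>m. {x \<in> A. h x = m})"
    using assms by (intro summable_on_UnionI[where g = g]) (auto simp: disjoint_family_on_def)
  moreover have "(\<Union>m. {x \<in> A. h x = m}) = A" by blast
  ultimately show ?thesis by simp
qed

lemma power_Suc_neq_one:
  fixes q :: "'a::real_normed_div_algebra"
  assumes "norm q < 1"
  shows "q ^ Suc n \<noteq> 1"
proof
  assume "q ^ Suc n = 1"
  then have "norm q ^ Suc n = 1"
    by (metis norm_one norm_power)
  moreover have "norm q ^ Suc n < 1"
    using assms by (simp only: power_less_one_iff norm_ge_zero) simp
  ultimately show False
    by simp
qed

lemma has_sum_bool_nat_geometric:
  fixes w z :: "'a::{real_normed_field,banach}"
  assumes "norm z < 1"
  shows "((\<lambda>(b, c). w ^ of_bool b * z ^ c) has_sum (1 + w) / (1 - z)) UNIV"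
    and "(\<lambda>(b, c). w ^ of_bool b * z ^ c) abs_summable_on UNIV"
proof -
  have bool: "((\<lambda>b. w ^ of_bool b) has_sum 1 + w) UNIV"
    by (rule has_sum_finiteI) (simp_all add: UNIV_bool)
  have geom_abs: "summable (\<lambda>c. norm (z ^ c))"
    using assms by (simp add: norm_power summable_geometric)
  then have geom: "((\<lambda>c. z ^ c) has_sum 1 / (1 - z)) UNIV"
    using assms by (intro norm_summable_imp_has_sum) (simp_all add: geometric_sums)
  have "(\<lambda>c. z ^ c) abs_summable_on UNIV"
    using geom_abs by (simp add: summable_on_UNIV_nonneg_real_iff)
  from has_sum_mult_Times[OF bool geom _ this]
  show "((\<lambda>(b, c). w ^ of_bool b * z ^ c) has_sum (1 + w) / (1 - z)) UNIV"
    and "(\<lambda>(b, c). w ^ of_bool b * z ^ c) abs_summable_on UNIV"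
    by simp_all
qed

lemma qpoch_0 [simp]: "qpoch x q 0 = 1"
  by (simp add: qpoch_def)

lemma qpoch_Suc: "qpoch x q (Suc n) = qpoch x q n * (1 - x * q ^ n)"
  by (simp add: qpoch_def)

lemma qpoch_Suc_shift: "qpoch x q (Suc n) = (1 - x) * qpoch (x * q) q n"
  unfolding qpoch_def by (subst prod.lessThan_Suc_shift) (simp add: mult.assoc)

definition max_part_gf :: "'a::field \<Rightarrow> 'a \<Rightarrow> nat \<Rightarrow> 'a" where
  "max_part_gf a q m = q ^ m * qpoch (- a) q m / qpoch q q m"

context
  fixes q :: "'a::field"
  assumes not_root_of_unity: "\<And>n. q ^ Suc n \<noteq> 1"
begin

lemma one_minus_power_Suc_nonzero: "1 - q ^ Suc n \<noteq> 0"
  using not_root_of_unity by simp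

lemma qpoch_q_nonzero: "qpoch q q n \<noteq> 0"
  using not_root_of_unity by (simp add: qpoch_def flip: power_Suc)

lemma qbinom_0_right [simp]: "qbinom q m 0 = 1"
  using qpoch_q_nonzero by (simp add: qbinom_def)

lemma qbinom_Suc_Suc_absorb:
  "qbinom q (Suc m) (Suc j) * (1 - q ^ Suc j) = qbinom q m j * (1 - q ^ Suc m)"
proof (cases "j \<le> m")
  case True
  then show ?thesis
    using qpoch_q_nonzero one_minus_power_Suc_nonzero
    by (simp add: qbinom_def qpoch_Suc field_simps flip: power_Suc)
qed (simp add: qbinom_def)

lemma qbinom_Suc_right_absorb:
  "qbinom q m (Suc j) * (1 - q ^ Suc j) = qbinom q m j * (1 - q ^ (m - j))"
proof (cases "j < m")
  case True
  then have "m - j = Suc (m - Suc j)" by simp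
  then show ?thesis
    using True qpoch_q_nonzero one_minus_power_Suc_nonzero
    by (simp add: qbinom_def qpoch_Suc field_simps flip: power_Suc)
qed (auto simp: qbinom_def)

lemma qbinom_pascal:
  "qbinom q (Suc m) (Suc j) = qbinom q m (Suc j) + q ^ (m - j) * qbinom q m j"
proof (cases "j \<le> m")
  case True
  have "(qbinom q m (Suc j) + q ^ (m - j) * qbinom q m j) * (1 - q ^ Suc j)
      = qbinom q m (Suc j) * (1 - q ^ Suc j) + q ^ (m - j) * qbinom q m j * (1 - q ^ Suc j)"
    by (simp add: algebra_simps)
  also have "\<dots> = qbinom q m j * (1 - q ^ (m - j) * q ^ Suc j)"
    by (simp only: qbinom_Suc_right_absorb) (simp add: algebra_simps)
  also have "q ^ (m - j) * q ^ Suc j = q ^ Suc m"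
    using True by (simp flip: power_add)
  finally show ?thesis
    using qbinom_Suc_Suc_absorb one_minus_power_Suc_nonzero
    by (metis mult_right_cancel)
qed (simp add: qbinom_def)

theorem qbinomial_Rothe:
  "(\<Sum>j\<le>m. a ^ j * q ^ (j choose 2) * qbinom q m j) = qpoch (- a) q m"
proof (induction m)
  case 0
  then show ?case by (simp add: binomial_eq_0)
next
  case (Suc m)
  define f where "f j = a ^ j * q ^ (j choose 2) * qbinom q m j" for j
  have f_Suc: "a ^ Suc j * q ^ (Suc j choose 2) * qbinom q (Suc m) (Suc j) = f (Suc j) + a * q ^ m * f j"
    if "j \<le> m" for j
  proof -
    have "q ^ (Suc j choose 2) * q ^ (m - j) = q ^ m * q ^ (j choose 2)"
      using that by (simp add: numeral_2_eq_2 add.commute flip: power_add)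
    then show ?thesis
      by (simp add: qbinom_pascal f_def algebra_simps)
  qed
  have "(\<Sum>j\<le>Suc m. a ^ j * q ^ (j choose 2) * qbinom q (Suc m) j)
      = 1 + (\<Sum>j\<le>m. a ^ Suc j * q ^ (Suc j choose 2) * qbinom q (Suc m) (Suc j))"
    by (subst sum.atMost_Suc_shift) (simp add: binomial_eq_0)
  also have "(\<Sum>j\<le>m. a ^ Suc j * q ^ (Suc j choose 2) * qbinom q (Suc m) (Suc j))
      = (\<Sum>j\<le>m. f (Suc j)) + a * q ^ m * (\<Sum>j\<le>m. f j)"
    unfolding sum_distrib_left sum.distrib[symmetric] by (rule sum.cong) (simp_all only: f_Suc atMost_iff)
  also have "1 + ((\<Sum>j\<le>m. f (Suc j)) + a * q ^ m * (\<Sum>j\<le>m. f j))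
      = (1 + a * q ^ m) * (\<Sum>j\<le>m. f j)"
  proof -
    have "f 0 = 1" by (simp add: f_def binomial_eq_0)
    moreover have "f (Suc m) = 0" by (simp add: f_def qbinom_def)
    ultimately show ?thesis using sum.atMost_Suc_shift[of f m] by (simp add: algebra_simps)
  qed
  also have "\<dots> = qpoch (- a) q (Suc m)"
    using Suc.IH by (simp add: f_def qpoch_Suc mult.commute)
  finally show ?case .
qed

lemma sum_max_part_gf:
  "(\<Sum>m\<le>N. max_part_gf a q m) = qpoch (- a * q) q N / qpoch q q N"
proof (induction N)
  case (Suc N)
  have "max_part_gf a q (Suc N)
      = q ^ Suc N * (1 + a) * qpoch (- a * q) q N / (qpoch q q N * (1 - q ^ Suc N))"
    unfolding max_part_gf_def qpoch_Suc_shift[of "- a"] qpoch_Suc[of q q N] by (simp add: mult_ac)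
  then show ?case
    using Suc.IH qpoch_q_nonzero[of N] one_minus_power_Suc_nonzero[of N]
    by (simp add: qpoch_Suc field_simps)
qed (simp add: max_part_gf_def)

end

lemma max_part_gf_nonneg:
  fixes b r :: real
  assumes "0 \<le> b" "0 \<le> r" "r < 1"
  shows "0 \<le> max_part_gf b r m"
proof -
  have "0 \<le> qpoch (- b) r m"
    using assms by (simp add: qpoch_def prod_nonneg)
  moreover have "0 \<le> qpoch r r m"
    using assms by (simp add: qpoch_def prod_nonneg power_le_one flip: power_Suc)
  ultimately show ?thesis
    using assms by (simp add: max_part_gf_def)
qed

lemma summable_max_part_gf_real:
  fixes b r :: real
  assumes "0 \<le> b" "0 \<le> r" "r < 1"
  shows "summable (max_part_gf b r)"
proof -
  define R where "R m = r * (1 + b * r ^ m) / (1 - r ^ Suc m)" for m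
  have r_pow: "r ^ Suc m < 1" for m
    using assms by (simp only: power_less_one_iff) simp
  have gf_Suc: "max_part_gf b r (Suc m) = R m * max_part_gf b r m" for m
    using qpoch_q_nonzero[of r m] r_pow[of m]
    by (simp add: max_part_gf_def R_def qpoch_Suc field_simps)
  note gf_nonneg = max_part_gf_nonneg[OF assms]
  have "R \<longlonglongrightarrow> r * (1 + b * 0) / (1 - r * 0)"
    unfolding R_def power_Suc using assms by (intro tendsto_intros LIMSEQ_realpow_zero) auto
  then have "eventually (\<lambda>m. R m < (1 + r) / 2) sequentially"
    using assms by (intro order_tendstoD) auto
  then obtain N where N: "\<And>m. m \<ge> N \<Longrightarrow> R m < (1 + r) / 2"
    by (auto simp: eventually_sequentially)
  show ?thesis
  proof (rule summable_ratio_test[where c = "(1 + r) / 2" and N = N])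
    fix m assume "N \<le> m"
    have "0 \<le> R m"
      using assms r_pow[of m] by (simp add: R_def)
    then show "norm (max_part_gf b r (Suc m)) \<le> (1 + r) / 2 * norm (max_part_gf b r m)"
      using mult_right_mono[OF less_imp_le[OF N[OF \<open>N \<le> m\<close>]] gf_nonneg[of m]]
      by (simp add: gf_Suc gf_nonneg)
  qed (use assms in simp)
qed

definition op_weight :: "'a::comm_ring_1 \<Rightarrow> 'a \<Rightarrow> overpartition \<Rightarrow> 'a" where
  "op_weight a q \<pi> = a ^ op_overlined \<pi> * q ^ op_size \<pi>"

lemma norm_op_weight: "norm (op_weight a q \<pi>) = op_weight (norm a) (norm q) \<pi>"
  for a q :: "'a::real_normed_field"
  by (simp add: op_weight_def norm_mult norm_power)

definition op_max_part :: "overpartition \<Rightarrow> nat" where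
  "op_max_part \<pi> = Max (insert 0 (set_mset (fst \<pi>)))"

lemma op_max_part_le_iff: "op_max_part \<pi> \<le> N \<longleftrightarrow> (\<forall>x\<in>#fst \<pi>. x \<le> N)"
  by (simp add: op_max_part_def)

definition bounded_overpartitions :: "nat \<Rightarrow> overpartition set" where
  "bounded_overpartitions N = {\<pi> \<in> overpartitions. op_max_part \<pi> \<le> N}"

lemma bounded_overpartitions_0: "bounded_overpartitions 0 = {({#}, {})}"
  unfolding bounded_overpartitions_def op_max_part_le_iff
  by (auto simp: overpartitions_def subset_iff) (metis multiset_nonemptyE, fastforce)

definition attach_parts :: "nat \<Rightarrow> overpartition \<times> bool \<times> nat \<Rightarrow> overpartition" where
  "attach_parts k = (\<lambda>((P, S), b, c).
     (P + replicate_mset (of_bool b + c) k, if b then insert k S else S))"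

definition detach_parts :: "nat \<Rightarrow> overpartition \<Rightarrow> overpartition \<times> bool \<times> nat" where
  "detach_parts k = (\<lambda>(P, S).
     ((filter_mset (\<lambda>x. x \<noteq> k) P, S - {k}), k \<in> S, count P k - of_bool (k \<in> S)))"

lemma bij_betw_attach_parts:
  "bij_betw (attach_parts (Suc N)) (bounded_overpartitions N \<times> UNIV) (bounded_overpartitions (Suc N))"
proof (rule bij_betw_byWitness[where f' = "detach_parts (Suc N)"])
  show "\<forall>x\<in>bounded_overpartitions N \<times> UNIV. detach_parts (Suc N) (attach_parts (Suc N) x) = x"
  proof
    fix x :: "overpartition \<times> bool \<times> nat"
    assume x: "x \<in> bounded_overpartitions N \<times> UNIV"
    obtain P S b c where x_eq: "x = ((P, S), b, c)" by (metis prod.collapse)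
    have "Suc N \<notin># P" and "Suc N \<notin> S"
      using x by (fastforce simp: x_eq bounded_overpartitions_def overpartitions_def op_max_part_le_iff)+
    moreover from this(1) have "filter_mset (\<lambda>x. x \<noteq> Suc N) P = P"
      by (auto simp: multiset_eq_iff not_in_iff)
    moreover have "filter_mset (\<lambda>x. x \<noteq> Suc N) (replicate_mset n (Suc N)) = {#}" for n
      by (induction n) auto
    ultimately show "detach_parts (Suc N) (attach_parts (Suc N) x) = x"
      by (auto simp: x_eq attach_parts_def detach_parts_def not_in_iff)
  qed
  show "\<forall>\<pi>\<in>bounded_overpartitions (Suc N). attach_parts (Suc N) (detach_parts (Suc N) \<pi>) = \<pi>"
  proof
    fix \<pi> assume "\<pi> \<in> bounded_overpartitions (Suc N)"
    obtain P S where \<pi>_eq: "\<pi> = (P, S)" by (cases \<pi>)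
    have "S \<subseteq> set_mset P"
      using \<open>\<pi> \<in> _\<close> by (auto simp: \<pi>_eq bounded_overpartitions_def overpartitions_def)
    then have "of_bool (Suc N \<in> S) \<le> count P (Suc N)"
      by (auto simp: Suc_le_eq)
    then have "filter_mset (\<lambda>x. x \<noteq> Suc N) P
        + replicate_mset (of_bool (Suc N \<in> S) + (count P (Suc N) - of_bool (Suc N \<in> S))) (Suc N) = P"
      by (auto simp: multiset_eq_iff)
    then show "attach_parts (Suc N) (detach_parts (Suc N) \<pi>) = \<pi>"
      by (auto simp: \<pi>_eq attach_parts_def detach_parts_def)
  qed
  show "attach_parts (Suc N) ` (bounded_overpartitions N \<times> UNIV) \<subseteq> bounded_overpartitions (Suc N)"
  proof (rule image_subsetI, clarify)
    fix P S b c assume "(P, S) \<in> bounded_overpartitions N"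
    then show "attach_parts (Suc N) ((P, S), b, c) \<in> bounded_overpartitions (Suc N)"
      by (auto simp: bounded_overpartitions_def overpartitions_def op_max_part_le_iff attach_parts_def)
  qed
  show "detach_parts (Suc N) ` bounded_overpartitions (Suc N) \<subseteq> bounded_overpartitions N \<times> UNIV"
  proof (rule image_subsetI, clarify)
    fix P S assume "(P, S) \<in> bounded_overpartitions (Suc N)"
    then show "detach_parts (Suc N) (P, S) \<in> bounded_overpartitions N \<times> UNIV"
      unfolding bounded_overpartitions_def op_max_part_le_iff
      by (auto simp: overpartitions_def detach_parts_def le_Suc_eq)
  qed
qed

lemma op_weight_attach_parts:
  assumes "k \<notin> S" and "finite S"
  shows "op_weight a q (attach_parts k ((P, S), b, c))
    = op_weight a q (P, S) * ((a * q ^ k) ^ of_bool b * (q ^ k) ^ c)"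
  using assms
  by (cases b) (simp_all add: attach_parts_def op_weight_def op_overlined_def op_size_def
      power_add power_mult_distrib algebra_simps flip: power_mult)

lemma has_sum_op_weight_bounded:
  fixes a q :: "'a::{real_normed_field,banach}"
  assumes q: "norm q < 1"
  shows "(op_weight a q has_sum qpoch (- a * q) q N / qpoch q q N) (bounded_overpartitions N)
    \<and> op_weight a q abs_summable_on bounded_overpartitions N"
proof (induction N)
  case 0
  show ?case
    by (simp add: bounded_overpartitions_0 op_weight_def op_overlined_def op_size_def has_sum_finite_iff)
next
  case (Suc N)
  define block where "block = (\<lambda>(b, c). (a * q ^ Suc N) ^ of_bool b * (q ^ Suc N) ^ c)"
  have "norm (q ^ Suc N) < 1"
    using q by (simp only: norm_power power_less_one_iff norm_ge_zero) simp
  note block_sum = has_sum_bool_nat_geometric[OF this, of "a * q ^ Suc N", folded block_def]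
  have weight: "op_weight a q (attach_parts (Suc N) x) = op_weight a q (fst x) * block (snd x)"
    if "x \<in> bounded_overpartitions N \<times> UNIV" for x
  proof -
    obtain P S b c where x_eq: "x = ((P, S), b, c)" by (metis prod.collapse)
    have "S \<subseteq> set_mset P" and "\<forall>y\<in>#P. y \<le> N"
      using that by (auto simp: x_eq bounded_overpartitions_def overpartitions_def op_max_part_le_iff)
    then have "Suc N \<notin> S" and "finite S"
      using finite_subset by fastforce+
    then show ?thesis
      by (simp add: x_eq op_weight_attach_parts block_def)
  qed
  have prod_sum: "((\<lambda>(\<pi>, e). op_weight a q \<pi> * block e)
      has_sum qpoch (- a * q) q (Suc N) / qpoch q q (Suc N)) (bounded_overpartitions N \<times> UNIV)"
    using has_sum_mult_Times(1)[OF conjunct1[OF Suc.IH] block_sum(1)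
        conjunct2[OF Suc.IH] block_sum(2)]
    by (simp add: qpoch_Suc mult_ac)
  have prod_abs: "(\<lambda>(\<pi>, e). op_weight a q \<pi> * block e)
      abs_summable_on (bounded_overpartitions N \<times> UNIV)"
    using has_sum_mult_Times(2)[OF conjunct1[OF Suc.IH] block_sum(1)
        conjunct2[OF Suc.IH] block_sum(2)] .
  note reindex = bij_betw_attach_parts[of N]
  show ?case
  proof
    show "(op_weight a q has_sum qpoch (- a * q) q (Suc N) / qpoch q q (Suc N))
        (bounded_overpartitions (Suc N))"
      using prod_sum by (simp add: has_sum_reindex_bij_betw[OF reindex, symmetric] weight split_beta
          cong: has_sum_cong)
    have "(\<lambda>x. norm (op_weight a q (attach_parts (Suc N) x)))
        summable_on (bounded_overpartitions N \<times> UNIV)"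
      using prod_abs by (rule summable_on_cong[THEN iffD1, rotated]) (simp add: weight split_beta)
    then show "op_weight a q abs_summable_on bounded_overpartitions (Suc N)"
      using summable_on_reindex[OF bij_betw_imp_inj_on[OF reindex], of "\<lambda>\<pi>. norm (op_weight a q \<pi>)"]
      by (simp add: bij_betw_imp_surj_on[OF reindex] o_def)
  qed
qed

lemma has_sum_op_weight_max_part:
  fixes a q :: "'a::{real_normed_field,banach}"
  assumes q: "norm q < 1"
  shows "(op_weight a q has_sum max_part_gf a q m) {\<pi> \<in> overpartitions. op_max_part \<pi> = m}"
proof (cases m)
  case 0
  then have "{\<pi> \<in> overpartitions. op_max_part \<pi> = m} = bounded_overpartitions 0"
    by (simp add: bounded_overpartitions_def)
  then show ?thesis
    using 0 conjunct1[OF has_sum_op_weight_bounded[OF q, of a 0]] by (simp add: max_part_gf_def)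
next
  case (Suc n)
  have "bounded_overpartitions n \<subseteq> bounded_overpartitions m"
    using Suc by (auto simp: bounded_overpartitions_def)
  from has_sum_Diff[OF conjunct1[OF has_sum_op_weight_bounded[OF q]]
      conjunct1[OF has_sum_op_weight_bounded[OF q]] this]
  have "(op_weight a q has_sum (\<Sum>k\<le>m. max_part_gf a q k) - (\<Sum>k\<le>n. max_part_gf a q k))
      (bounded_overpartitions m - bounded_overpartitions n)"
    by (simp only: sum_max_part_gf[OF power_Suc_neq_one[OF q]])
  moreover have "bounded_overpartitions m - bounded_overpartitions n
      = {\<pi> \<in> overpartitions. op_max_part \<pi> = m}"
    using Suc by (auto simp: bounded_overpartitions_def)
  ultimately show ?thesis
    using Suc by simp
qed

theorem mainTheorem10:
  fixes a q :: complex
  assumes "norm q < 1"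
  shows "summable (\<lambda>m. q ^ m / qpoch q q m *
            (\<Sum>j\<le>m. a ^ j * q ^ (j choose 2) * qbinom q m j))
     \<and> ((\<lambda>\<pi>. a ^ op_overlined \<pi> * q ^ op_size \<pi>) has_sum
          (\<Sum>m. q ^ m / qpoch q q m *
            (\<Sum>j\<le>m. a ^ j * q ^ (j choose 2) * qbinom q m j))) overpartitions"
proof -
  have series: "(\<lambda>m. q ^ m / qpoch q q m * (\<Sum>j\<le>m. a ^ j * q ^ (j choose 2) * qbinom q m j))
      = max_part_gf a q"
    by (simp add: fun_eq_iff max_part_gf_def qbinomial_Rothe[OF power_Suc_neq_one[OF assms]])
  have "(\<lambda>\<pi>. norm (op_weight a q \<pi>)) summable_on overpartitions"
  proof (rule summable_on_fibres_nonneg)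
    show "((\<lambda>\<pi>. norm (op_weight a q \<pi>)) has_sum max_part_gf (norm a) (norm q) m)
        {\<pi> \<in> overpartitions. op_max_part \<pi> = m}" for m
      unfolding norm_op_weight using assms by (simp add: has_sum_op_weight_max_part)
    show "max_part_gf (norm a) (norm q) summable_on UNIV"
      using assms max_part_gf_nonneg summable_max_part_gf_real
      by (simp add: summable_on_UNIV_nonneg_real_iff)
  qed simp
  then obtain W where W: "(op_weight a q has_sum W) overpartitions"
    using abs_summable_summable summable_on_def by blast
  then have "(max_part_gf a q has_sum W) UNIV"
    using has_sum_op_weight_max_part[OF assms] by (rule has_sum_fibres)
  then have "max_part_gf a q sums W"
    by (rule has_sum_imp_sums)
  with W show ?thesis
    unfolding series op_weight_def[symmetric] by (simp add: sums_iff)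
qed

end
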